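(* Let $\rho$ be a measure on $(0,\infty)$ such that $\int_{(b,\infty)}s^{-1/2}\rho(\mathrm{d}s)<\infty$ for all $b>0$. Then $\mathfrak{A}(\rho)$ is definable.
   Context: A measure $\sigma$ on $(0,\infty)$ is locally finite on $(0,\infty)$ if $\sigma((b,c))<\infty$ whenever $0<b<c<\infty$. For a measure $\rho$ on $(0,\infty)$, $\mathfrak{A}(\rho)$ is said to be definable if the function $u\mapsto\int_{(u,\infty)}\pi^{-1/2}(s-u)^{-1/2}\rho(\mathrm{d}s)$ is the density (with respect to Lebesgue measure on $(0,\infty)$) of a locally finite measure on $(0,\infty)$; this measure is then denoted $\mathfrak{A}(\rho)(\mathrm{d}u)=\big(\int_{(u,\infty)}\pi^{-1/2}(s-u)^{-1/2}\rho(\mathrm{d}s)\big)\mathrm{d}u$. *)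

theory Defs
  imports "HOL-Analysis.Analysis"
begin

text \<open>Measures on (0,\<infinity>) are modelled as measures on the reals whose sigma-algebra
  is the Borel sigma-algebra restricted to {0<..}.\<close>

definition pos_half_line_measure :: "real measure \<Rightarrow> bool" where
  "pos_half_line_measure \<rho> \<longleftrightarrow> sets \<rho> = sets (restrict_space borel {0<..})"

definition locally_finite_on_pos :: "real measure \<Rightarrow> bool" where
  "locally_finite_on_pos \<sigma> \<longleftrightarrow>
     (\<forall>b c. 0 < b \<longrightarrow> b < c \<longrightarrow> emeasure \<sigma> {b<..<c} < \<infinity>)"

definition frakA_density :: "real measure \<Rightarrow> real \<Rightarrow> ennreal" where
  "frakA_density \<rho> u =
     (\<integral>\<^sup>+ s. indicator {u<..} s * ennreal (1 / sqrt pi * (s - u) powr (-1/2)) \<partial>\<rho>)"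

definition lebesgue_pos :: "real measure" where
  "lebesgue_pos = restrict_space lborel {0<..}"

definition frakA :: "real measure \<Rightarrow> real measure" where
  "frakA \<rho> = density lebesgue_pos (frakA_density \<rho>)"

definition frakA_definable :: "real measure \<Rightarrow> bool" where
  "frakA_definable \<rho> \<longleftrightarrow>
     frakA_density \<rho> \<in> borel_measurable lebesgue_pos \<and> locally_finite_on_pos (frakA \<rho>)"

end

theory Submission
  imports Defs
begin

(* Tonelli's theorem reduces everything to rho.  It makes the density measurable once rho is
   sigma-finite, which holds because rho((b,c]) <= sqrt c * int_(b,oo) s^(-1/2) rho(ds); and it gives
   A(rho)((b,c)) = int (int_b^c pi^(-1/2) (s - u)^(-1/2) [u < s] du) rho(ds).  The inner integral
   is at most 4 c s^(-1/2) [s > b]: for s >= 2c the integrand is at most sqrt 2 * s^(-1/2) on an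
   interval of length c, and for s < 2c the integral is at most
   int_0^(2c) v^(-1/2) dv = 2 sqrt (2c) <= 4 c s^(-1/2). *)

lemma powr_neg_half: "0 < x \<Longrightarrow> x powr (-1/2) = 1 / sqrt (x::real)"
  by (simp add: powr_minus_divide powr_half_sqrt)

definition abel_kernel :: "real \<Rightarrow> real \<Rightarrow> ennreal" where
  "abel_kernel u s = indicator {u<..} s * ennreal (1 / sqrt pi * (s - u) powr (-1/2))"

lemma borel_measurable_abel_kernel:
  assumes "(\<lambda>u. u) \<in> borel_measurable M" and "(\<lambda>s. s) \<in> borel_measurable N"
  shows "case_prod abel_kernel \<in> borel_measurable (M \<Otimes>\<^sub>M N)"
proof -
  have [measurable]: "fst \<in> borel_measurable (M \<Otimes>\<^sub>M N)" "snd \<in> borel_measurable (M \<Otimes>\<^sub>M N)"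
    using measurable_compose[OF measurable_fst assms(1), of N]
      measurable_compose[OF measurable_snd assms(2), of M]
    by simp_all
  have eq: "case_prod abel_kernel =
      (\<lambda>x. if fst x < snd x then ennreal (1 / sqrt pi * (snd x - fst x) powr (-1/2)) else 0)"
    by (auto simp: abel_kernel_def fun_eq_iff)
  show ?thesis unfolding eq by measurable
qed

lemma abel_kernel_le: "abel_kernel u s \<le> ennreal ((s - u) powr (-1/2)) * indicator {..<s} u"
proof -
  have "1 / sqrt pi \<le> 1" using pi_gt3 by (simp add: real_sqrt_ge_one)
  then have "1 / sqrt pi * (s - u) powr (-1/2) \<le> (s - u) powr (-1/2)"
    by (intro mult_left_le_one_le) auto
  then show ?thesis by (auto simp: abel_kernel_def indicator_def intro: ennreal_leI)
qed

lemma nn_integral_powr_neg_half_Icc: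
  assumes "0 \<le> a"
  shows "(\<integral>\<^sup>+ u. ennreal ((s - u) powr (-1/2)) * indicator {s - a..s} u \<partial>lborel)
    = ennreal (2 * sqrt a)"
proof -
  have "(\<integral>\<^sup>+ u. ennreal ((s - u) powr (-1/2)) * indicator {s - a..s} u \<partial>lborel)
      = (\<integral>\<^sup>+ v. ennreal (v powr (-1/2)) * indicator {0..a} v \<partial>lborel)"
    using nn_integral_real_affine[where c = "-1" and t = s,
        of "\<lambda>u. ennreal ((s - u) powr (-1/2)) * indicator {s - a..s} u"]
    by (simp add: indicator_def conj_commute)
  also have "\<dots> = ennreal (a powr (-1/2 + 1) / (-1/2 + 1))"
    by (rule nn_integral_has_integral_lebesgue'[OF _ has_integral_powr_from_0]) (use assms in auto)
  also have "\<dots> = ennreal (2 * sqrt a)"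
    by (simp add: powr_half_sqrt assms)
  finally show ?thesis .
qed

lemma nn_integral_powr_neg_half_Ioo_le:
  assumes "0 < c" "0 < s"
  shows "(\<integral>\<^sup>+ u. ennreal ((s - u) powr (-1/2)) * indicator ({0<..<c} \<inter> {..<s}) u \<partial>lborel)
    \<le> ennreal (4 * c / sqrt s)"
proof (cases "2 * c \<le> s")
  case True
  have "(s - u) powr (-1/2) \<le> sqrt 2 / sqrt s" if "0 < u" "u < c" for u
  proof -
    have "(s - u) powr (-1/2) \<le> (s / 2) powr (-1/2)"
      using that True by (intro powr_mono2') auto
    also have "\<dots> = sqrt 2 / sqrt s"
      using powr_neg_half[of "s / 2"] assms by (simp add: real_sqrt_divide)
    finally show ?thesis .
  qed
  then have "(\<integral>\<^sup>+ u. ennreal ((s - u) powr (-1/2)) * indicator ({0<..<c} \<inter> {..<s}) u \<partial>lborel)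
      \<le> (\<integral>\<^sup>+ u. ennreal (sqrt 2 / sqrt s) * indicator {0<..<c} u \<partial>lborel)"
    by (intro nn_integral_mono) (auto simp: indicator_def intro: ennreal_leI)
  also have "\<dots> = ennreal (sqrt 2 / sqrt s * c)"
    using assms by (simp add: nn_integral_cmult_indicator ennreal_mult'[symmetric])
  also have "\<dots> \<le> ennreal (4 * c / sqrt s)"
  proof (intro ennreal_leI)
    have "sqrt 2 \<le> 4" using real_sqrt_le_mono[of 2 16] by simp
    then show "sqrt 2 / sqrt s * c \<le> 4 * c / sqrt s"
      using assms by (simp add: divide_right_mono mult.commute mult_left_mono)
  qed
  finally show ?thesis .
next
  case False
  have "(\<integral>\<^sup>+ u. ennreal ((s - u) powr (-1/2)) * indicator ({0<..<c} \<inter> {..<s}) u \<partial>lborel)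
      \<le> (\<integral>\<^sup>+ u. ennreal ((s - u) powr (-1/2)) * indicator {s - 2 * c..s} u \<partial>lborel)"
    using False assms by (intro nn_integral_mono) (auto simp: indicator_def)
  also have "\<dots> = ennreal (2 * sqrt (2 * c))"
    using assms by (intro nn_integral_powr_neg_half_Icc) simp
  also have "\<dots> \<le> ennreal (4 * c / sqrt s)"
  proof (intro ennreal_leI)
    have "sqrt (2 * c) * sqrt s \<le> sqrt (2 * c) * sqrt (2 * c)"
      using False assms by (intro mult_left_mono) auto
    then show "2 * sqrt (2 * c) \<le> 4 * c / sqrt s"
      using assms by (simp add: field_simps)
  qed
  finally show ?thesis .
qed

lemma nn_integral_abel_kernel_Ioo_le:
  assumes "0 < b" "b < c"
  shows "(\<integral>\<^sup>+ u. abel_kernel u s * indicator {b<..<c} u \<partial>lborel)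
    \<le> ennreal (4 * c) * (indicator {b<..} s * ennreal (s powr (-1/2)))"
proof (cases "b < s")
  case False
  have "(\<integral>\<^sup>+ u. abel_kernel u s * indicator {b<..<c} u \<partial>lborel)
      = (\<integral>\<^sup>+ u. 0 \<partial>(lborel :: real measure))"
    using False by (intro nn_integral_cong) (auto simp: abel_kernel_def indicator_def)
  then show ?thesis by simp
next
  case True
  then have "0 < s" using assms by simp
  have "(\<integral>\<^sup>+ u. abel_kernel u s * indicator {b<..<c} u \<partial>lborel)
      \<le> (\<integral>\<^sup>+ u. ennreal ((s - u) powr (-1/2)) * indicator ({0<..<c} \<inter> {..<s}) u \<partial>lborel)"
  proof (intro nn_integral_mono)
    fix u
    have "abel_kernel u s * indicator {b<..<c} u
        \<le> ennreal ((s - u) powr (-1/2)) * indicator {..<s} u * indicator {b<..<c} u"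
      by (intro mult_right_mono abel_kernel_le) simp
    also have "\<dots> \<le> ennreal ((s - u) powr (-1/2)) * indicator ({0<..<c} \<inter> {..<s}) u"
      using assms by (auto simp: indicator_def)
    finally show "abel_kernel u s * indicator {b<..<c} u
        \<le> ennreal ((s - u) powr (-1/2)) * indicator ({0<..<c} \<inter> {..<s}) u" .
  qed
  also have "\<dots> \<le> ennreal (4 * c / sqrt s)"
    using assms \<open>0 < s\<close> by (intro nn_integral_powr_neg_half_Ioo_le) auto
  also have "\<dots> = ennreal (4 * c) * (indicator {b<..} s * ennreal (s powr (-1/2)))"
    using True assms powr_neg_half[OF \<open>0 < s\<close>] by (simp add: ennreal_mult'[symmetric])
  finally show ?thesis .
qed

lemma measurable_pos_half_line_measure:
  assumes "pos_half_line_measure \<rho>" and "f \<in> borel_measurable borel"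
  shows "f \<in> borel_measurable \<rho>"
  using assms(1) unfolding pos_half_line_measure_def
  by (subst measurable_cong_sets[OF _ refl], assumption)
    (rule measurable_restrict_space1, rule assms(2))

lemma space_pos_half_line_measure:
  assumes "pos_half_line_measure \<rho>"
  shows "space \<rho> = {0<..}"
  using sets_eq_imp_space_eq[of \<rho> "restrict_space borel {0<..}"] assms
  by (simp add: pos_half_line_measure_def space_restrict_space)

lemma sets_pos_half_line_measure:
  assumes "pos_half_line_measure \<rho>" and "0 < b"
  shows "{b<..c} \<in> sets \<rho>"
  using assms by (auto simp: pos_half_line_measure_def sets_restrict_space_iff)

lemma emeasure_Ioc_le_nn_integral_powr_neg_half:
  assumes "pos_half_line_measure \<rho>" and "0 < b"
  shows "emeasure \<rho> {b<..c}
    \<le> ennreal (sqrt c) * (\<integral>\<^sup>+ s. indicator {b<..} s * ennreal (s powr (-1/2)) \<partial>\<rho>)"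
proof -
  have pointwise:
    "indicator {b<..c} s \<le> ennreal (sqrt c) * (indicator {b<..} s * ennreal (s powr (-1/2)))"
    for s :: real
  proof (cases "b < s \<and> s \<le> c")
    case True
    then have "0 < s" using assms by simp
    have "1 \<le> sqrt c * s powr (-1/2)"
      using True powr_neg_half[OF \<open>0 < s\<close>] \<open>0 < s\<close> by (simp add: le_divide_eq)
    then have "1 \<le> ennreal (sqrt c * s powr (-1/2))"
      unfolding ennreal_1[symmetric] by (rule ennreal_leI)
    also have "\<dots> = ennreal (sqrt c) * ennreal (s powr (-1/2))"
      using True \<open>0 < s\<close> by (intro ennreal_mult) auto
    finally show ?thesis
      using True by simp
  qed simp
  have "emeasure \<rho> {b<..c} = (\<integral>\<^sup>+ s. indicator {b<..c} s \<partial>\<rho>)"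
    using sets_pos_half_line_measure[OF assms] by simp
  also have "\<dots> \<le> (\<integral>\<^sup>+ s. ennreal (sqrt c) * (indicator {b<..} s * ennreal (s powr (-1/2))) \<partial>\<rho>)"
    by (intro nn_integral_mono pointwise)
  also have "\<dots> = ennreal (sqrt c) * (\<integral>\<^sup>+ s. indicator {b<..} s * ennreal (s powr (-1/2)) \<partial>\<rho>)"
    by (rule nn_integral_cmult, rule measurable_pos_half_line_measure[OF assms(1)]) measurable
  finally show ?thesis .
qed

lemma sigma_finite_pos_half_line_measure:
  assumes pos: "pos_half_line_measure \<rho>"
    and fin: "\<And>b c. 0 < b \<Longrightarrow> emeasure \<rho> {b<..c} < \<infinity>"
  shows "sigma_finite_measure \<rho>"
proof
  define A where "A n = {1 / Suc n<..real (Suc n)}" for n :: nat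
  have "\<Union> (range A) = {0<..}"
  proof (intro equalityI subsetI)
    fix x assume "x \<in> \<Union> (range A)"
    then obtain n where "1 / Suc n < x" by (auto simp: A_def)
    then show "x \<in> {0<..}" by (simp add: less_trans[OF _ \<open>1 / Suc n < x\<close>])
  next
    fix x :: real assume "x \<in> {0<..}"
    then have "0 < x" by simp
    obtain n :: nat where n: "max x (1 / x) < n" using reals_Archimedean2 by blast
    then have "1 / Suc n < x" "x \<le> Suc n"
      using \<open>0 < x\<close> by (auto simp: field_simps)
    then show "x \<in> \<Union> (range A)" by (auto simp: A_def)
  qed
  moreover have "emeasure \<rho> (A n) \<noteq> \<infinity>" for n
    using fin[of "1 / Suc n" "Suc n"] by (simp add: A_def)
  ultimately show
    "\<exists>A. countable A \<and> A \<subseteq> sets \<rho> \<and> \<Union> A = space \<rho> \<and> (\<forall>a\<in>A. emeasure \<rho> a \<noteq> \<infinity>)"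
    using sets_pos_half_line_measure[OF pos]
    by (intro exI[of _ "range A"]) (auto simp: A_def space_pos_half_line_measure[OF pos])
qed

lemma frakA_density_eq_nn_integral_abel_kernel:
  "frakA_density \<rho> u = (\<integral>\<^sup>+ s. abel_kernel u s \<partial>\<rho>)"
  by (simp add: frakA_density_def abel_kernel_def)

lemma borel_measurable_frakA_density:
  assumes "pos_half_line_measure \<rho>" and "sigma_finite_measure \<rho>"
  shows "frakA_density \<rho> \<in> borel_measurable lborel"
  unfolding frakA_density_eq_nn_integral_abel_kernel
  using measurable_pos_half_line_measure[OF assms(1), of "\<lambda>s. s"]
  by (intro sigma_finite_measure.borel_measurable_nn_integral[OF assms(2)]
      borel_measurable_abel_kernel) auto

lemma emeasure_frakA_Ioo_le:
  assumes pos: "pos_half_line_measure \<rho>" and "sigma_finite_measure \<rho>"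
    and "0 < b" "b < c"
  shows "emeasure (frakA \<rho>) {b<..<c}
    \<le> ennreal (4 * c) * (\<integral>\<^sup>+ s. indicator {b<..} s * ennreal (s powr (-1/2)) \<partial>\<rho>)"
proof -
  interpret rho: sigma_finite_measure \<rho> by fact
  interpret pair_sigma_finite lborel \<rho> ..
  have id_measurable: "(\<lambda>s. s) \<in> borel_measurable \<rho>"
    by (rule measurable_pos_half_line_measure[OF pos]) simp
  have [measurable]: "case_prod abel_kernel \<in> borel_measurable (lborel \<Otimes>\<^sub>M \<rho>)"
    using id_measurable by (intro borel_measurable_abel_kernel) auto
  have "emeasure (frakA \<rho>) {b<..<c}
      = (\<integral>\<^sup>+ u. frakA_density \<rho> u * indicator {b<..<c} u \<partial>lebesgue_pos)"
    using borel_measurable_frakA_density[OF assms(1,2)] \<open>0 < b\<close>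
    unfolding frakA_def lebesgue_pos_def
    by (intro emeasure_density measurable_restrict_space1) (auto simp: sets_restrict_space_iff)
  also have "\<dots> = (\<integral>\<^sup>+ u. frakA_density \<rho> u * indicator {b<..<c} u * indicator {0<..} u \<partial>lborel)"
    unfolding lebesgue_pos_def by (rule nn_integral_restrict_space) simp
  also have "\<dots> = (\<integral>\<^sup>+ u. (\<integral>\<^sup>+ s. abel_kernel u s * indicator {b<..<c} u \<partial>\<rho>) \<partial>lborel)"
    using \<open>0 < b\<close>
    by (intro nn_integral_cong) (auto simp: frakA_density_eq_nn_integral_abel_kernel indicator_def)
  also have "\<dots> = (\<integral>\<^sup>+ s. (\<integral>\<^sup>+ u. abel_kernel u s * indicator {b<..<c} u \<partial>lborel) \<partial>\<rho>)"
    by (intro Fubini'[symmetric]) measurable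
  also have "\<dots> \<le> (\<integral>\<^sup>+ s. ennreal (4 * c) * (indicator {b<..} s * ennreal (s powr (-1/2))) \<partial>\<rho>)"
    using assms(3,4) by (intro nn_integral_mono nn_integral_abel_kernel_Ioo_le)
  also have "\<dots> = ennreal (4 * c) * (\<integral>\<^sup>+ s. indicator {b<..} s * ennreal (s powr (-1/2)) \<partial>\<rho>)"
    by (rule nn_integral_cmult, rule measurable_pos_half_line_measure[OF pos]) measurable
  finally show ?thesis .
qed

theorem lemma2p6:
  fixes \<rho> :: "real measure"
  assumes "pos_half_line_measure \<rho>"
    and "\<And>b. 0 < b \<Longrightarrow> (\<integral>\<^sup>+ s. indicator {b<..} s * ennreal (s powr (-1/2)) \<partial>\<rho>) < \<infinity>"
  shows "frakA_definable \<rho>"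
proof -
  have "emeasure \<rho> {b<..c} < \<infinity>" if "0 < b" for b c
    using emeasure_Ioc_le_nn_integral_powr_neg_half[OF assms(1) that, of c] assms(2)[OF that]
    by (elim order.strict_trans1) (simp add: ennreal_mult_less_top)
  then have sigma_finite: "sigma_finite_measure \<rho>"
    using assms(1) by (intro sigma_finite_pos_half_line_measure)
  have "frakA_density \<rho> \<in> borel_measurable lebesgue_pos"
    unfolding lebesgue_pos_def
    by (intro measurable_restrict_space1 borel_measurable_frakA_density assms(1) sigma_finite)
  moreover have "emeasure (frakA \<rho>) {b<..<c} < \<infinity>" if "0 < b" "b < c" for b c
    using emeasure_frakA_Ioo_le[OF assms(1) sigma_finite that] assms(2)[OF \<open>0 < b\<close>]
    by (elim order.strict_trans1) (simp add: ennreal_mult_less_top)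
  ultimately show ?thesis
    by (simp add: frakA_definable_def locally_finite_on_pos_def)
qed

end
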